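(* Let $P:\mathcal{C}^{\mathrm{op}}\to\mathbf{Pos}$ be a universal slat-doctrine such that $\mathcal{C}$ has exponents. Then the multiplication $\mu_P:(P^{ex})^{ex}\to P^{ex}$ of the existential-completion 2-monad preserves the universal structure, i.e. for all objects $A,B$ of $\mathcal{C}$, $\mu_{P,A}$ commutes with the right adjoints of reindexing along $\mathrm{pr}_A:A\times B\to A$ in $(P^{ex})^{ex}$ and in $P^{ex}$.
   Context: A slat-doctrine is a functor $P:\mathcal{C}^{\mathrm{op}}\to\mathbf{Pos}$ with $\mathcal{C}$ having finite products; $P_f$ is reindexing along $f$. It is existential (resp. universal) if reindexing along each product projection has a left adjoint $\exists$ (resp. right adjoint $\forall$) satisfying Beck–Chevalley (for every pullback of a projection $\mathrm{pr}:X\to A$ along $f:A'\to A$, with resulting projection $\mathrm{pr}'$ and $f':X'\to X$, $\exists_{\mathrm{pr}'}P_{f'}=P_f\exists_{\mathrm{pr}}$, resp. $\forall_{\mathrm{pr}'}P_{f'}=P_f\forall_{\mathrm{pr}}$). Existential completion: $P^{ex}(A)$ is the poset (reflection) of triples $(A,B,\alpha)$, $\alpha\in P(A\times B)$, with $(A,B,\alpha)\le(A,C,\beta)$ iff some $f:A\times B\to C$ has $\alpha\le P_{\langle\mathrm{pr}_A,f\rangle}(\beta)$; $P^{ex}_f(C,D,\gamma)=(A,D,P_{f\times 1_D}(\gamma))$. $P^{ex}$ is existential with $\exists^{ex}_{\mathrm{pr}_1}(A_1\times A_2,B,\beta)=(A_1,A_2\times B,\beta)$; when $P$ is universal and $\mathcal{C}$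 has exponents, $P^{ex}$ and $(P^{ex})^{ex}$ are universal. The multiplication component $\mu_{P,A}:(P^{ex})^{ex}(A)\to P^{ex}(A)$ sends $(A,B,x)$, with $x\in P^{ex}(A\times B)$, to $\exists^{ex}_{\mathrm{pr}_A}(x)$ for $\mathrm{pr}_A:A\times B\to A$. *)

theory Defs
  imports Main
begin

record ('o, 'm) cat =
  carr  :: "'m set"
  cdom  :: "'m \<Rightarrow> 'o"
  ccod  :: "'m \<Rightarrow> 'o"
  ccmp  :: "'m \<Rightarrow> 'm \<Rightarrow> 'm"   (* ccmp C g f = g o f *)
  cid   :: "'o \<Rightarrow> 'm"
  cprd  :: "'o \<Rightarrow> 'o \<Rightarrow> 'o"
  cpr1  :: "'o \<Rightarrow> 'o \<Rightarrow> 'm"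
  cpr2  :: "'o \<Rightarrow> 'o \<Rightarrow> 'm"
  cpair :: "'m \<Rightarrow> 'm \<Rightarrow> 'm"
  ctrm  :: "'o"
  cbang :: "'o \<Rightarrow> 'm"
  cexp  :: "'o \<Rightarrow> 'o \<Rightarrow> 'o"   (* cexp C A B = B^A *)
  cev   :: "'o \<Rightarrow> 'o \<Rightarrow> 'm"
  clam  :: "'o \<Rightarrow> 'o \<Rightarrow> 'o \<Rightarrow> 'm \<Rightarrow> 'm"

definition hom :: "('o,'m) cat \<Rightarrow> 'o \<Rightarrow> 'o \<Rightarrow> 'm set" where
  "hom C A B = {f \<in> carr C. cdom C f = A \<and> ccod C f = B}"

definition category :: "('o,'m) cat \<Rightarrow> bool" where
  "category C \<longleftrightarrow>
     (\<forall>A. cid C A \<in> hom C A A) \<and>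
     (\<forall>f g. f \<in> carr C \<and> g \<in> carr C \<and> ccod C f = cdom C g \<longrightarrow>
            ccmp C g f \<in> hom C (cdom C f) (ccod C g)) \<and>
     (\<forall>f \<in> carr C. ccmp C f (cid C (cdom C f)) = f \<and> ccmp C (cid C (ccod C f)) f = f) \<and>
     (\<forall>f g h. f \<in> carr C \<and> g \<in> carr C \<and> h \<in> carr C \<and>
            ccod C f = cdom C g \<and> ccod C g = cdom C h \<longrightarrow>
            ccmp C h (ccmp C g f) = ccmp C (ccmp C h g) f)"

definition cartesian :: "('o,'m) cat \<Rightarrow> bool" where
  "cartesian C \<longleftrightarrow> category C \<and>
     (\<forall>A B. cpr1 C A B \<in> hom C (cprd C A B) A \<and> cpr2 C A B \<in> hom C (cprd C A B) B) \<and>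
     (\<forall>X A B f g. f \<in> hom C X A \<and> g \<in> hom C X B \<longrightarrow>
         cpair C f g \<in> hom C X (cprd C A B) \<and>
         ccmp C (cpr1 C A B) (cpair C f g) = f \<and> ccmp C (cpr2 C A B) (cpair C f g) = g) \<and>
     (\<forall>X A B h. h \<in> hom C X (cprd C A B) \<longrightarrow>
         cpair C (ccmp C (cpr1 C A B) h) (ccmp C (cpr2 C A B) h) = h) \<and>
     (\<forall>X. cbang C X \<in> hom C X (ctrm C)) \<and>
     (\<forall>X h. h \<in> hom C X (ctrm C) \<longrightarrow> h = cbang C X)"

definition cross :: "('o,'m) cat \<Rightarrow> 'm \<Rightarrow> 'm \<Rightarrow> 'm" where
  "cross C f g = cpair C (ccmp C f (cpr1 C (cdom C f) (cdom C g)))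
                         (ccmp C g (cpr2 C (cdom C f) (cdom C g)))"

definition ccc :: "('o,'m) cat \<Rightarrow> bool" where
  "ccc C \<longleftrightarrow> cartesian C \<and>
     (\<forall>A B. cev C A B \<in> hom C (cprd C (cexp C A B) A) B) \<and>
     (\<forall>X A B f. f \<in> hom C (cprd C X A) B \<longrightarrow>
         clam C X A B f \<in> hom C X (cexp C A B) \<and>
         ccmp C (cev C A B) (cross C (clam C X A B f) (cid C A)) = f) \<and>
     (\<forall>X A B g. g \<in> hom C X (cexp C A B) \<longrightarrow>
         clam C X A B (ccmp C (cev C A B) (cross C g (cid C A))) = g)"

definition cassoc :: "('o,'m) cat \<Rightarrow> 'o \<Rightarrow> 'o \<Rightarrow> 'o \<Rightarrow> 'm" where
  "cassoc C A B D =
     cpair C (cpair C (cpr1 C A (cprd C B D)) (ccmp C (cpr1 C B D) (cpr2 C A (cprd C B D))))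
             (ccmp C (cpr2 C B D) (cpr2 C A (cprd C B D)))"

text \<open>P A is the carrier of the fibre over A, le A its order, re f the reindexing P_f.\<close>
definition doctrine :: "('o,'m) cat \<Rightarrow> ('o \<Rightarrow> 'p set) \<Rightarrow> ('o \<Rightarrow> 'p \<Rightarrow> 'p \<Rightarrow> bool)
                        \<Rightarrow> ('m \<Rightarrow> 'p \<Rightarrow> 'p) \<Rightarrow> bool" where
  "doctrine C P le re \<longleftrightarrow> cartesian C \<and>
     (\<forall>A. (\<forall>x\<in>P A. le A x x) \<and>
          (\<forall>x\<in>P A. \<forall>y\<in>P A. \<forall>z\<in>P A. le A x y \<and> le A y z \<longrightarrow> le A x z) \<and>
          (\<forall>x\<in>P A. \<forall>y\<in>P A. le A x y \<and> le A y x \<longrightarrow> x = y)) \<and>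
     (\<forall>A B f. f \<in> hom C A B \<longrightarrow>
          (\<forall>x\<in>P B. re f x \<in> P A) \<and>
          (\<forall>x\<in>P B. \<forall>y\<in>P B. le B x y \<longrightarrow> le A (re f x) (re f y))) \<and>
     (\<forall>A. \<forall>x\<in>P A. re (cid C A) x = x) \<and>
     (\<forall>A B D f g. f \<in> hom C A B \<and> g \<in> hom C B D \<longrightarrow>
          (\<forall>x\<in>P D. re (ccmp C g f) x = re f (re g x)))"

text \<open>Universal: reindexing along each projection pr1 : A x B -> A has a right adjoint
  satisfying Beck-Chevalley (w.r.t. the pullback square given by f x id_B).\<close>
definition universal :: "('o,'m) cat \<Rightarrow> ('o \<Rightarrow> 'p set) \<Rightarrow> ('o \<Rightarrow> 'p \<Rightarrow> 'p \<Rightarrow> bool)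
                        \<Rightarrow> ('m \<Rightarrow> 'p \<Rightarrow> 'p) \<Rightarrow> bool" where
  "universal C P le re \<longleftrightarrow> (\<exists>fa. \<forall>A B.
     (\<forall>x\<in>P (cprd C A B). fa A B x \<in> P A) \<and>
     (\<forall>x\<in>P (cprd C A B). \<forall>y\<in>P A.
         le A y (fa A B x) \<longleftrightarrow> le (cprd C A B) (re (cpr1 C A B) y) x) \<and>
     (\<forall>A' f x. f \<in> hom C A' A \<and> x \<in> P (cprd C A B) \<longrightarrow>
         fa A' B (re (cross C f (cid C B)) x) = re f (fa A B x)))"

section \<open>Existential completion (as a preorder on triples; P^ex(A) is its poset reflection)\<close>

text \<open>An element (A,B,alpha) of P^ex(A) is represented as the pair (B, alpha).\<close>
definition ex_car :: "('o,'m) cat \<Rightarrow> ('o \<Rightarrow> 'p set) \<Rightarrow> 'o \<Rightarrow> ('o \<times> 'p) set" where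
  "ex_car C P A = {u. snd u \<in> P (cprd C A (fst u))}"

definition ex_le :: "('o,'m) cat \<Rightarrow> ('o \<Rightarrow> 'p \<Rightarrow> 'p \<Rightarrow> bool) \<Rightarrow> ('m \<Rightarrow> 'p \<Rightarrow> 'p)
                     \<Rightarrow> 'o \<Rightarrow> ('o \<times> 'p) \<Rightarrow> ('o \<times> 'p) \<Rightarrow> bool" where
  "ex_le C le re A u v \<longleftrightarrow>
     (\<exists>f \<in> hom C (cprd C A (fst u)) (fst v).
        le (cprd C A (fst u)) (snd u) (re (cpair C (cpr1 C A (fst u)) f) (snd v)))"

definition ex_re :: "('o,'m) cat \<Rightarrow> ('m \<Rightarrow> 'p \<Rightarrow> 'p) \<Rightarrow> 'm \<Rightarrow> ('o \<times> 'p) \<Rightarrow> ('o \<times> 'p)" where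
  "ex_re C re f u = (fst u, re (cross C f (cid C (fst u))) (snd u))"

text \<open>Multiplication mu_{P,A}: (A,B,(A x B, D, gamma)) |-> (A, B x D, P_assoc gamma)
  = exists^ex_{pr_A}(A x B, D, gamma).\<close>
definition ex_mu :: "('o,'m) cat \<Rightarrow> ('m \<Rightarrow> 'p \<Rightarrow> 'p) \<Rightarrow> 'o
                     \<Rightarrow> ('o \<times> ('o \<times> 'p)) \<Rightarrow> ('o \<times> 'p)" where
  "ex_mu C re A w = (cprd C (fst w) (fst (snd w)),
                     re (cassoc C A (fst w) (fst (snd w))) (snd (snd w)))"

definition is_rall :: "('o,'m) cat \<Rightarrow> ('o \<Rightarrow> 'q set) \<Rightarrow> ('o \<Rightarrow> 'q \<Rightarrow> 'q \<Rightarrow> bool)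
                       \<Rightarrow> ('m \<Rightarrow> 'q \<Rightarrow> 'q) \<Rightarrow> 'o \<Rightarrow> 'o \<Rightarrow> 'q \<Rightarrow> 'q \<Rightarrow> bool" where
  "is_rall C Q le re A B x z \<longleftrightarrow>
     z \<in> Q A \<and> le (cprd C A B) (re (cpr1 C A B) z) x \<and>
     (\<forall>y\<in>Q A. le (cprd C A B) (re (cpr1 C A B) y) x \<longrightarrow> le A y z)"

end

theory Submission
  imports Defs
begin

text \<open>The multiplication \<open>\<mu>\<^sub>P\<close> is monotone and natural, and it is right adjoint to
  \<open>(\<eta>\<^sub>P)\<^sup>e\<^sup>x\<close>: \<open>(\<eta>\<^sub>P)\<^sup>e\<^sup>x y \<le> x\<close> iff \<open>y \<le> \<mu>\<^sub>P x\<close> (the existential completion is lax idempotent).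
  If \<open>z = \<forall>x\<close> in \<open>(P\<^sup>e\<^sup>x)\<^sup>e\<^sup>x\<close>, then \<open>P\<^sup>e\<^sup>x\<^sub>p\<^sub>r(\<mu> z) = \<mu>((P\<^sup>e\<^sup>x)\<^sup>e\<^sup>x\<^sub>p\<^sub>r z) \<le> \<mu> x\<close>; conversely
  \<open>P\<^sup>e\<^sup>x\<^sub>p\<^sub>r y \<le> \<mu> x\<close> gives \<open>(P\<^sup>e\<^sup>x)\<^sup>e\<^sup>x\<^sub>p\<^sub>r((\<eta>\<^sub>P)\<^sup>e\<^sup>x y) = (\<eta>\<^sub>P)\<^sup>e\<^sup>x(P\<^sup>e\<^sup>x\<^sub>p\<^sub>r y) \<le> x\<close>, hence
  \<open>(\<eta>\<^sub>P)\<^sup>e\<^sup>x y \<le> z\<close> and \<open>y \<le> \<mu> z\<close>. Exponents and universality of \<open>P\<close> only guarantee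
  that the right adjoints exist; preservation holds wherever they do.\<close>

locale cartesian_category =
  fixes C :: "('o, 'm) cat"
  assumes cartesian: "cartesian C"
begin

lemma category: "category C"
  using cartesian unfolding cartesian_def by blast

lemma hom_iff [simp]: "f \<in> hom C A B \<longleftrightarrow> f \<in> carr C \<and> cdom C f = A \<and> ccod C f = B"
  by (simp add: hom_def)

lemma cid_simps [simp]: "cid C A \<in> carr C" "cdom C (cid C A) = A" "ccod C (cid C A) = A"
  using category unfolding category_def by auto

lemma ccmp_simps [simp]:
  assumes "f \<in> carr C" "g \<in> carr C" "ccod C f = cdom C g"
  shows "ccmp C g f \<in> carr C" "cdom C (ccmp C g f) = cdom C f" "ccod C (ccmp C g f) = ccod C g"
  using category assms unfolding category_def by auto

lemma ccmp_assoc [simp]: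
  assumes "f \<in> carr C" "g \<in> carr C" "h \<in> carr C" "ccod C f = cdom C g" "ccod C g = cdom C h"
  shows "ccmp C (ccmp C h g) f = ccmp C h (ccmp C g f)"
  using category assms unfolding category_def by metis

lemma ccmp_cid_right [simp]: "f \<in> carr C \<Longrightarrow> cdom C f = A \<Longrightarrow> ccmp C f (cid C A) = f"
  using category unfolding category_def by blast

lemma ccmp_cid_left [simp]: "f \<in> carr C \<Longrightarrow> ccod C f = A \<Longrightarrow> ccmp C (cid C A) f = f"
  using category unfolding category_def by blast

lemma cpr_simps [simp]:
  "cpr1 C A B \<in> carr C" "cdom C (cpr1 C A B) = cprd C A B" "ccod C (cpr1 C A B) = A"
  "cpr2 C A B \<in> carr C" "cdom C (cpr2 C A B) = cprd C A B" "ccod C (cpr2 C A B) = B"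
  using cartesian unfolding cartesian_def by auto

lemma cbang_simps [simp]:
  "cbang C X \<in> carr C" "cdom C (cbang C X) = X" "ccod C (cbang C X) = ctrm C"
  using cartesian unfolding cartesian_def by auto

lemma cpair_simps [simp]:
  assumes "f \<in> carr C" "g \<in> carr C" "cdom C f = cdom C g"
  shows "cpair C f g \<in> carr C" "cdom C (cpair C f g) = cdom C f"
    "ccod C (cpair C f g) = cprd C (ccod C f) (ccod C g)"
  using cartesian assms unfolding cartesian_def by (metis hom_iff)+

lemma cpr_cpair [simp]:
  assumes "f \<in> carr C" "g \<in> carr C" "cdom C f = cdom C g" "ccod C f = A" "ccod C g = B"
  shows "ccmp C (cpr1 C A B) (cpair C f g) = f" "ccmp C (cpr2 C A B) (cpair C f g) = g"
  using cartesian assms unfolding cartesian_def by (metis hom_iff)+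

lemma cpair_eta [simp]:
  assumes "h \<in> carr C" "ccod C h = cprd C A B"
  shows "cpair C (ccmp C (cpr1 C A B) h) (ccmp C (cpr2 C A B) h) = h"
  using cartesian assms unfolding cartesian_def by (metis hom_iff)

lemma ccmp_cpair [simp]:
  assumes "f \<in> carr C" "g \<in> carr C" "k \<in> carr C" "cdom C f = cdom C g" "ccod C k = cdom C f"
  shows "ccmp C (cpair C f g) k = cpair C (ccmp C f k) (ccmp C g k)"
proof -
  let ?h = "ccmp C (cpair C f g) k"
  have "cpair C (ccmp C (cpr1 C (ccod C f) (ccod C g)) ?h) (ccmp C (cpr2 C (ccod C f) (ccod C g)) ?h)
      = ?h"
    using assms by (intro cpair_eta) auto
  then show ?thesis
    using assms by (simp flip: ccmp_assoc)
qed

lemma cross_simps [simp]: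
  assumes "f \<in> carr C" "g \<in> carr C"
  shows "cross C f g \<in> carr C" "cdom C (cross C f g) = cprd C (cdom C f) (cdom C g)"
    "ccod C (cross C f g) = cprd C (ccod C f) (ccod C g)"
  using assms by (simp_all add: cross_def)

lemma cassoc_simps [simp]:
  "cassoc C A B D \<in> carr C" "cdom C (cassoc C A B D) = cprd C A (cprd C B D)"
  "ccod C (cassoc C A B D) = cprd C (cprd C A B) D"
  by (simp_all add: cassoc_def)

lemma cassoc_natural:
  assumes "f \<in> hom C A' A"
  shows "ccmp C (cassoc C A B D) (cross C f (cid C (cprd C B D)))
       = ccmp C (cross C (cross C f (cid C B)) (cid C D)) (cassoc C A' B D)"
  using assms by (simp add: cassoc_def cross_def)

lemma ex_re_in_ex_car:
  assumes "\<And>A B g x. g \<in> hom C A B \<Longrightarrow> x \<in> Q B \<Longrightarrow> reQ g x \<in> Q A"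
    and "f \<in> hom C A' A" and "u \<in> ex_car C Q A"
  shows "ex_re C reQ f u \<in> ex_car C Q A'"
proof -
  have "cross C f (cid C (fst u)) \<in> hom C (cprd C A' (fst u)) (cprd C A (fst u))"
    using assms(2) by simp
  from assms(1)[OF this] show ?thesis
    using assms(3) by (simp add: ex_car_def ex_re_def)
qed

end

text \<open>The existential completion \<open>(\<eta>\<^sub>P)\<^sup>e\<^sup>x : P\<^sup>e\<^sup>x \<rightarrow> (P\<^sup>e\<^sup>x)\<^sup>e\<^sup>x\<close> of the unit
  \<open>\<eta>\<^sub>P(\<alpha>) = (A, 1, P\<^sub>p\<^sub>r\<^sub>1 \<alpha>)\<close>.\<close>

definition ex_map_unit ::
    "('o, 'm) cat \<Rightarrow> ('m \<Rightarrow> 'p \<Rightarrow> 'p) \<Rightarrow> 'o \<Rightarrow> ('o \<times> 'p) \<Rightarrow> ('o \<times> ('o \<times> 'p))" where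
  "ex_map_unit C re A y = (fst y, ctrm C, re (cpr1 C (cprd C A (fst y)) (ctrm C)) (snd y))"

locale pos_doctrine = cartesian_category C
  for C :: "('o, 'm) cat" +
  fixes P :: "'o \<Rightarrow> 'p set" and le :: "'o \<Rightarrow> 'p \<Rightarrow> 'p \<Rightarrow> bool" and re :: "'m \<Rightarrow> 'p \<Rightarrow> 'p"
  assumes doctrine: "doctrine C P le re"
begin

lemma reindex_closed [simp]:
  "f \<in> carr C \<Longrightarrow> cdom C f = A \<Longrightarrow> x \<in> P (ccod C f) \<Longrightarrow> re f x \<in> P A"
  using doctrine unfolding doctrine_def by (metis hom_iff)

lemma reindex_mono:
  "f \<in> hom C A B \<Longrightarrow> x \<in> P B \<Longrightarrow> y \<in> P B \<Longrightarrow> le B x y \<Longrightarrow> le A (re f x) (re f y)"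
  using doctrine unfolding doctrine_def by blast

lemma reindex_cid [simp]: "x \<in> P A \<Longrightarrow> re (cid C A) x = x"
  using doctrine unfolding doctrine_def by blast

text \<open>Oriented to merge iterated reindexings into one along a composite, so that simp reduces
  inequalities between reindexings to equations of morphisms.\<close>

lemma reindex_reindex [simp]:
  "f \<in> carr C \<Longrightarrow> g \<in> carr C \<Longrightarrow> ccod C f = cdom C g \<Longrightarrow> x \<in> P (ccod C g)
   \<Longrightarrow> re f (re g x) = re (ccmp C g f) x"
  using doctrine unfolding doctrine_def by (metis hom_iff)

lemma ex_re_closed:
  "f \<in> hom C A' A \<Longrightarrow> u \<in> ex_car C P A \<Longrightarrow> ex_re C re f u \<in> ex_car C P A'"
  by (rule ex_re_in_ex_car[where Q = P]) simp_all

lemma ex_re_ex_re_closed: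
  "f \<in> hom C A' A \<Longrightarrow> u \<in> ex_car C (ex_car C P) A
   \<Longrightarrow> ex_re C (ex_re C re) f u \<in> ex_car C (ex_car C P) A'"
  by (rule ex_re_in_ex_car[OF ex_re_closed])

lemma ex_mu_in_ex_car:
  "u \<in> ex_car C (ex_car C P) A \<Longrightarrow> ex_mu C re A u \<in> ex_car C P A"
  by (auto simp: ex_car_def ex_mu_def)

lemma ex_re_ex_mu:
  assumes "f \<in> hom C A' A" "u \<in> ex_car C (ex_car C P) A"
  shows "ex_re C re f (ex_mu C re A u) = ex_mu C re A' (ex_re C (ex_re C re) f u)"
  using assms cassoc_natural[OF assms(1)]
  by (auto simp: ex_car_def ex_mu_def ex_re_def)

lemma ex_mu_mono:
  assumes u: "u \<in> ex_car C (ex_car C P) A" and v: "v \<in> ex_car C (ex_car C P) A"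
    and le_uv: "ex_le C (ex_le C le re) (ex_re C re) A u v"
  shows "ex_le C le re A (ex_mu C re A u) (ex_mu C re A v)"
proof -
  obtain B D \<gamma> where u_eq: "u = (B, D, \<gamma>)" and \<gamma>: "\<gamma> \<in> P (cprd C (cprd C A B) D)"
    using u by (cases u) (auto simp: ex_car_def)
  obtain E F \<delta> where v_eq: "v = (E, F, \<delta>)" and \<delta>: "\<delta> \<in> P (cprd C (cprd C A E) F)"
    using v by (cases v) (auto simp: ex_car_def)
  obtain f g where f: "f \<in> hom C (cprd C A B) E" and g: "g \<in> hom C (cprd C (cprd C A B) D) F"
    and le_\<gamma>: "le (cprd C (cprd C A B) D) \<gamma>
      (re (cpair C (cpr1 C (cprd C A B) D) g) (re (cross C (cpair C (cpr1 C A B) f) (cid C F)) \<delta>))"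
    using le_uv by (auto simp: u_eq v_eq ex_le_def ex_re_def)
  let ?a = "cassoc C A B D"
  let ?k = "cpair C (ccmp C f (ccmp C (cpr1 C (cprd C A B) D) ?a)) (ccmp C g ?a)"
  have "le (cprd C A (cprd C B D)) (re ?a \<gamma>) (re ?a
      (re (cpair C (cpr1 C (cprd C A B) D) g) (re (cross C (cpair C (cpr1 C A B) f) (cid C F)) \<delta>)))"
    using f g \<gamma> \<delta> by (intro reindex_mono[OF _ _ _ le_\<gamma>]) auto
  then have "le (cprd C A (cprd C B D)) (re ?a \<gamma>)
      (re (cpair C (cpr1 C A (cprd C B D)) ?k) (re (cassoc C A E F) \<delta>))"
    using f g \<gamma> \<delta> by (simp add: cassoc_def cross_def)
  then show ?thesis
    using f g by (auto simp: u_eq v_eq ex_le_def ex_mu_def intro!: bexI[of _ ?k])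
qed

lemma ex_map_unit_le_iff_le_ex_mu:
  assumes y: "y \<in> ex_car C P A" and x: "x \<in> ex_car C (ex_car C P) A"
  shows "ex_le C (ex_le C le re) (ex_re C re) A (ex_map_unit C re A y) x
     \<longleftrightarrow> ex_le C le re A y (ex_mu C re A x)"
proof -
  obtain Y \<alpha> where y_eq: "y = (Y, \<alpha>)" and \<alpha>: "\<alpha> \<in> P (cprd C A Y)"
    using y by (cases y) (auto simp: ex_car_def)
  obtain E D \<gamma> where x_eq: "x = (E, D, \<gamma>)" and \<gamma>: "\<gamma> \<in> P (cprd C (cprd C A E) D)"
    using x by (cases x) (auto simp: ex_car_def)
  let ?T = "ctrm C" and ?AY = "cprd C A Y"
  let ?p = "cpr1 C ?AY ?T"
  show ?thesis
  proof
    assume "ex_le C (ex_le C le re) (ex_re C re) A (ex_map_unit C re A y) x"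
    then obtain f g where f: "f \<in> hom C ?AY E" and g: "g \<in> hom C (cprd C ?AY ?T) D"
      and le_fg: "le (cprd C ?AY ?T) (re ?p \<alpha>)
        (re (cpair C ?p g) (re (cross C (cpair C (cpr1 C A Y) f) (cid C D)) \<gamma>))"
      by (auto simp: y_eq x_eq ex_map_unit_def ex_le_def ex_re_def)
    let ?e = "cpair C (cid C ?AY) (cbang C ?AY)"
    let ?h = "cpair C f (ccmp C g ?e)"
    have "le ?AY (re ?e (re ?p \<alpha>))
        (re ?e (re (cpair C ?p g) (re (cross C (cpair C (cpr1 C A Y) f) (cid C D)) \<gamma>)))"
      using f g \<alpha> \<gamma> by (intro reindex_mono[OF _ _ _ le_fg]) auto
    then have "le ?AY \<alpha> (re (cpair C (cpr1 C A Y) ?h) (re (cassoc C A E D) \<gamma>))"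
      using f g \<alpha> \<gamma> by (simp add: cassoc_def cross_def)
    then show "ex_le C le re A y (ex_mu C re A x)"
      using f g by (auto simp: y_eq x_eq ex_le_def ex_mu_def intro!: bexI[of _ ?h])
  next
    assume "ex_le C le re A y (ex_mu C re A x)"
    then obtain h where h: "h \<in> hom C ?AY (cprd C E D)"
      and le_h: "le ?AY \<alpha> (re (cpair C (cpr1 C A Y) h) (re (cassoc C A E D) \<gamma>))"
      by (auto simp: y_eq x_eq ex_le_def ex_mu_def)
    let ?f = "ccmp C (cpr1 C E D) h" and ?g = "ccmp C (cpr2 C E D) (ccmp C h ?p)"
    have "le (cprd C ?AY ?T) (re ?p \<alpha>)
        (re ?p (re (cpair C (cpr1 C A Y) h) (re (cassoc C A E D) \<gamma>)))"
      using h \<alpha> \<gamma> by (intro reindex_mono[OF _ _ _ le_h]) auto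
    then have "le (cprd C ?AY ?T) (re ?p \<alpha>)
        (re (cpair C ?p ?g) (re (cross C (cpair C (cpr1 C A Y) ?f) (cid C D)) \<gamma>))"
      using h \<alpha> \<gamma> by (simp add: cassoc_def cross_def)
    moreover have "?f \<in> hom C ?AY E" "?g \<in> hom C (cprd C ?AY ?T) D"
      using h by auto
    ultimately show "ex_le C (ex_le C le re) (ex_re C re) A (ex_map_unit C re A y) x"
      unfolding y_eq x_eq ex_map_unit_def ex_le_def ex_re_def fst_conv snd_conv by blast
  qed
qed

lemma ex_map_unit_in_ex_car:
  "y \<in> ex_car C P A \<Longrightarrow> ex_map_unit C re A y \<in> ex_car C (ex_car C P) A"
  by (auto simp: ex_car_def ex_map_unit_def)

lemma ex_re_ex_map_unit:
  assumes "f \<in> hom C A' A" "y \<in> ex_car C P A"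
  shows "ex_re C (ex_re C re) f (ex_map_unit C re A y) = ex_map_unit C re A' (ex_re C re f y)"
  using assms by (auto simp: ex_car_def ex_map_unit_def ex_re_def cross_def)

lemma ex_mu_preserves_rall:
  assumes x: "x \<in> ex_car C (ex_car C P) (cprd C A B)"
    and z_rall: "is_rall C (ex_car C (ex_car C P)) (ex_le C (ex_le C le re) (ex_re C re))
      (ex_re C (ex_re C re)) A B x z"
  shows "is_rall C (ex_car C P) (ex_le C le re) (ex_re C re) A B
      (ex_mu C re (cprd C A B) x) (ex_mu C re A z)"
  unfolding is_rall_def
proof (intro conjI ballI impI)
  let ?p = "cpr1 C A B"
  have z: "z \<in> ex_car C (ex_car C P) A"
    and z_le: "ex_le C (ex_le C le re) (ex_re C re) (cprd C A B) (ex_re C (ex_re C re) ?p z) x"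
    and z_max: "\<And>w. w \<in> ex_car C (ex_car C P) A \<Longrightarrow>
       ex_le C (ex_le C le re) (ex_re C re) (cprd C A B) (ex_re C (ex_re C re) ?p w) x \<Longrightarrow>
       ex_le C (ex_le C le re) (ex_re C re) A w z"
    using z_rall unfolding is_rall_def by blast+
  show "ex_mu C re A z \<in> ex_car C P A"
    using z by (rule ex_mu_in_ex_car)
  have "ex_re C (ex_re C re) ?p z \<in> ex_car C (ex_car C P) (cprd C A B)"
    by (rule ex_re_ex_re_closed[OF _ z]) simp
  then have "ex_le C le re (cprd C A B)
      (ex_mu C re (cprd C A B) (ex_re C (ex_re C re) ?p z)) (ex_mu C re (cprd C A B) x)"
    using x z_le by (rule ex_mu_mono)
  then show "ex_le C le re (cprd C A B)
      (ex_re C re ?p (ex_mu C re A z)) (ex_mu C re (cprd C A B) x)"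
    by (subst ex_re_ex_mu[OF _ z]) simp_all
  fix y
  assume y: "y \<in> ex_car C P A"
    and "ex_le C le re (cprd C A B) (ex_re C re ?p y) (ex_mu C re (cprd C A B) x)"
  then have "ex_le C (ex_le C le re) (ex_re C re) (cprd C A B)
      (ex_map_unit C re (cprd C A B) (ex_re C re ?p y)) x"
    using ex_map_unit_le_iff_le_ex_mu[OF ex_re_closed[OF _ y] x] by simp
  then have "ex_le C (ex_le C le re) (ex_re C re) A (ex_map_unit C re A y) z"
    using y by (intro z_max ex_map_unit_in_ex_car) (simp_all add: ex_re_ex_map_unit)
  then show "ex_le C le re A y (ex_mu C re A z)"
    using ex_map_unit_le_iff_le_ex_mu[OF y z] by simp
qed

end

theorem lemma2:
  fixes C :: "('o, 'm) cat"
    and P :: "'o \<Rightarrow> 'p set"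
    and le :: "'o \<Rightarrow> 'p \<Rightarrow> 'p \<Rightarrow> bool"
    and re :: "'m \<Rightarrow> 'p \<Rightarrow> 'p"
  assumes "ccc C"
    and "doctrine C P le re"
    and "universal C P le re"
  shows "\<forall>A B x z.
           x \<in> ex_car C (ex_car C P) (cprd C A B) \<and>
           is_rall C (ex_car C (ex_car C P)) (ex_le C (ex_le C le re) (ex_re C re))
                   (ex_re C (ex_re C re)) A B x z
           \<longrightarrow> is_rall C (ex_car C P) (ex_le C le re) (ex_re C re) A B
                   (ex_mu C re (cprd C A B) x) (ex_mu C re A z)"
proof -
  have "cartesian C"
    using assms(2) unfolding doctrine_def by (rule conjunct1)
  then interpret pos_doctrine C P le re
    using assms(2)
    by (rule pos_doctrine.intro[OF cartesian_category.intro pos_doctrine_axioms.intro])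
  show ?thesis
    using ex_mu_preserves_rall by blast
qed

end
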